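(* Let $A\in\mathcal A$ and $k\ge1$, and let $B_A(\cdot;k)$ be its $k$-th degree Bernstein polynomial. Assume that ${\boldsymbol w}\mapsto B_A({\boldsymbol w};k)$ is convex on $\mathcal S_{d-1}$ and that $B_A({\boldsymbol v}_j;k)=1$ for all $j\in\{0,\dots,d-1\}$. Then $$B_A({\boldsymbol w};k)\ge\max(w_1,\dots,w_d)\ \text{ for all }{\boldsymbol w}\in\mathcal S_{d-1}\iff D_{{\boldsymbol v}_i-{\boldsymbol v}_j}B_A({\boldsymbol v}_j;k)\ge-1\ \text{ for all }(i,j)\in\{0,\dots,d-1\}^2,\ i\ne j.$$
   Context: $d\ge2$; $\mathcal S_{d-1}=\{(w_1,\dots,w_{d-1})\in[0,1]^{d-1}:\sum w_i\le1\}\subset\mathbb R^{d-1}$, $w_d=1-w_1-\dots-w_{d-1}$. $\mathcal A$ is the family of convex functions $A:\mathcal S_{d-1}\to[1/d,1]$ with $\max(w_1,\dots,w_d)\le A({\boldsymbol w})\le1$. $\Gamma_k$ is the set of ${\boldsymbol\alpha}\in\{0,\dots,k\}^{d-1}$ with $\sum\alpha_i\le k$, $\alpha_d=k-\sum_{i<d}\alpha_i$; $b_{\boldsymbol\alpha}({\boldsymbol w};k)=\frac{k!}{\alpha_1!\cdots\alpha_d!}\prod_{i=1}^dw_i^{\alpha_i}$ and $B_A({\boldsymbol w};k)=\sum_{{\boldsymbol\alpha}\in\Gamma_k}A({\boldsymbol\alpha}/k)b_{\boldsymbol\alpha}({\boldsymbol w};k)$ (a polynomial, hence defined on all of $\mathbb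 R^{d-1}$). The vertices are ${\boldsymbol v}_0={\bf 0}$ and ${\boldsymbol v}_r={\boldsymbol e}_r$ (canonical unit vector of $\mathbb R^{d-1}$), $r=1,\dots,d-1$. For ${\boldsymbol u}\in\mathbb R^{d-1}$, $D_{\boldsymbol u}B({\boldsymbol w};k)={\boldsymbol u}^\top\nabla B({\boldsymbol w};k)$ denotes the directional derivative. *)

theory Defs
  imports "HOL-Analysis.Analysis"
begin

text \<open>Points of R^(d-1) are vectors of type real^'n, with d - 1 = CARD('n), i.e. d = CARD('n) + 1 >= 2.\<close>

definition dim_d :: "'n::finite itself \<Rightarrow> nat" where
  "dim_d _ = CARD('n) + 1"

text \<open>w_d = 1 - w_1 - ... - w_(d-1)\<close>
definition lastc :: "real^'n::finite \<Rightarrow> real" where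
  "lastc w = 1 - (\<Sum>i\<in>UNIV. w $ i)"

definition simplexS :: "(real^'n::finite) set" where
  "simplexS = {w. (\<forall>i. 0 \<le> w $ i \<and> w $ i \<le> 1) \<and> (\<Sum>i\<in>UNIV. w $ i) \<le> 1}"

definition maxc :: "real^'n::finite \<Rightarrow> real" where
  "maxc w = Max (insert (lastc w) (range (\<lambda>i. w $ i)))"

definition classA :: "(real^'n::finite \<Rightarrow> real) set" where
  "classA = {A. convex_on simplexS A \<and>
     (\<forall>w\<in>simplexS. 1 / real (dim_d TYPE('n)) \<le> A w \<and> A w \<le> 1 \<and> maxc w \<le> A w)}"

definition Gamma :: "nat \<Rightarrow> ('n::finite \<Rightarrow> nat) set" where
  "Gamma k = {\<alpha>. (\<forall>i. \<alpha> i \<le> k) \<and> (\<Sum>i\<in>UNIV. \<alpha> i) \<le> k}"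

definition alpha_last :: "nat \<Rightarrow> ('n::finite \<Rightarrow> nat) \<Rightarrow> nat" where
  "alpha_last k \<alpha> = k - (\<Sum>i\<in>UNIV. \<alpha> i)"

definition bern_basis :: "nat \<Rightarrow> ('n::finite \<Rightarrow> nat) \<Rightarrow> real^'n \<Rightarrow> real" where
  "bern_basis k \<alpha> w =
     fact k / ((\<Prod>i\<in>UNIV. fact (\<alpha> i)) * fact (alpha_last k \<alpha>)) *
     ((\<Prod>i\<in>UNIV. (w $ i) ^ (\<alpha> i)) * (lastc w) ^ (alpha_last k \<alpha>))"

text \<open>B_A(w;k), a polynomial defined on all of R^(d-1)\<close>
definition bernstein :: "(real^'n::finite \<Rightarrow> real) \<Rightarrow> nat \<Rightarrow> real^'n \<Rightarrow> real" where
  "bernstein A k w = (\<Sum>\<alpha>\<in>Gamma k. A (\<chi> i. real (\<alpha> i) / real k) * bern_basis k \<alpha> w)"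

text \<open>Vertices: None is v_0 = 0, Some r is v_r = e_r\<close>
definition vertex :: "'n::finite option \<Rightarrow> real^'n" where
  "vertex j = (case j of None \<Rightarrow> 0 | Some r \<Rightarrow> axis r 1)"

definition partial :: "(real^'n::finite \<Rightarrow> real) \<Rightarrow> 'n \<Rightarrow> real^'n \<Rightarrow> real" where
  "partial f i w = deriv (\<lambda>t. f (w + t *\<^sub>R axis i 1)) 0"

definition dderiv :: "(real^'n::finite \<Rightarrow> real) \<Rightarrow> real^'n \<Rightarrow> real^'n \<Rightarrow> real" where
  "dderiv f u w = (\<Sum>i\<in>UNIV. u $ i * partial f i w)"

end

theory Submission
  imports Defs
begin

text \<open>
  Write bary w j (j = None, Some 1, ..., Some (d-1)) for the barycentric
  coordinates of w with respect to the vertices v_0, ..., v_(d-1) of the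
  simplex; then max(w_1,...,w_d) is the largest barycentric coordinate, so the
  inequality B >= max splits into the d inequalities B w >= bary w j.  For a
  fixed vertex v_j with B(v_j) = 1 the following holds for any function f
  that is differentiable at v_j:
    * if f >= bary . j on the simplex, then along each edge from v_j to v_i
      we have f(v_j + t(v_i - v_j)) >= 1 - t, so the one-sided difference
      quotient is >= -1 and hence D_(v_i - v_j) f(v_j) >= -1;
    * conversely, if f is convex, f lies above its tangent plane at v_j, and
      expanding w - v_j = sum_i bary w i (v_i - v_j) shows that the tangent
      plane is >= bary w j once all edge slopes are >= -1.
  The file first collects the calculus facts (difference quotients along a
  line, the tangent inequality for convex functions, differentiability of
  Bernstein polynomials), then the barycentric bookkeeping, then the two
  vertex lemmas; the theorem combines them.  Only the convexity of B and the
  normalisation B(v_j) = 1 are used.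
\<close>

lemma line_has_real_derivative:
  fixes f :: "'a::real_normed_vector \<Rightarrow> real"
  assumes "(f has_derivative D) (at x)"
  shows "((\<lambda>t. f (x + t *\<^sub>R u)) has_real_derivative D u) (at 0)"
proof -
  have "((\<lambda>t::real. x + t *\<^sub>R u) has_derivative (\<lambda>t. t *\<^sub>R u)) (at 0)"
    by (auto intro!: derivative_eq_intros)
  then have "((\<lambda>t. f (x + t *\<^sub>R u)) has_derivative (\<lambda>t. D (t *\<^sub>R u))) (at 0)"
    using has_derivative_compose assms by fastforce
  moreover have "(\<lambda>t. D (t *\<^sub>R u)) = (\<lambda>t. D u * t)"
    using linear_scale[OF has_derivative_linear[OF assms]] by (auto simp: mult.commute)
  ultimately show ?thesis by (simp add: has_field_derivative_def)
qed

lemma line_quotient_tendsto: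
  fixes f :: "'a::real_normed_vector \<Rightarrow> real"
  assumes "(f has_derivative D) (at x)"
  shows "((\<lambda>t. (f (x + t *\<^sub>R u) - f x) / t) \<longlongrightarrow> D u) (at_right 0)"
  using has_field_derivative_at_within[OF line_has_real_derivative[OF assms], where s = "{0<..}"]
  by (simp add: has_field_derivative_iff)

lemma derivative_lower_bound_on_segment:
  fixes f :: "'a::real_normed_vector \<Rightarrow> real"
  assumes D: "(f has_derivative D) (at x)"
    and drop: "\<And>t. 0 < t \<Longrightarrow> t < 1 \<Longrightarrow> f x - c * t \<le> f (x + t *\<^sub>R u)"
  shows "- c \<le> D u"
proof (rule tendsto_lowerbound[OF line_quotient_tendsto[OF D]])
  show "\<forall>\<^sub>F t in at_right 0. - c \<le> (f (x + t *\<^sub>R u) - f x) / t"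
    using eventually_at_right_real[OF zero_less_one]
  proof eventually_elim
    case (elim t)
    then have "f x - c * t \<le> f (x + t *\<^sub>R u)" using drop by simp
    then have "- c * t \<le> f (x + t *\<^sub>R u) - f x" by linarith
    with elim show ?case by (simp add: field_simps)
  qed
qed simp

text \<open>A convex function lies above its tangent plane at every point of its
  domain where it is differentiable, even on the boundary of the domain.\<close>

lemma convex_on_above_tangent:
  fixes f :: "'a::real_normed_vector \<Rightarrow> real"
  assumes cvx: "convex_on S f" and x: "x \<in> S" and y: "y \<in> S"
    and D: "(f has_derivative D) (at x)"
  shows "f x + D (y - x) \<le> f y"
proof -
  have "D (y - x) \<le> f y - f x"
  proof (rule tendsto_upperbound[OF line_quotient_tendsto[OF D]])
    show "\<forall>\<^sub>F t in at_right 0. (f (x + t *\<^sub>R (y - x)) - f x) / t \<le> f y - f x"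
      using eventually_at_right_real[OF zero_less_one]
    proof eventually_elim
      case (elim t)
      have "x + t *\<^sub>R (y - x) = (1 - t) *\<^sub>R x + t *\<^sub>R y" by (simp add: algebra_simps)
      moreover have "f ((1 - t) *\<^sub>R x + t *\<^sub>R y) \<le> (1 - t) * f x + t * f y"
        using convex_onD[OF cvx] elim x y by auto
      ultimately have "f (x + t *\<^sub>R (y - x)) - f x \<le> t * (f y - f x)"
        by (simp add: algebra_simps)
      with elim show ?case by (simp add: field_simps)
    qed
  qed simp
  then show ?thesis by simp
qed

lemma dderiv_eq:
  fixes f :: "real^'n::finite \<Rightarrow> real"
  assumes D: "(f has_derivative D) (at w)"
  shows "dderiv f u w = D u"
proof -
  have lin: "linear D" using D has_derivative_linear by blast
  have partial: "partial f i w = D (axis i 1)" for i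
    unfolding partial_def using line_has_real_derivative[OF D] DERIV_imp_deriv by blast
  have "dderiv f u w = (\<Sum>i\<in>UNIV. D ((u $ i) *\<^sub>R axis i 1))"
    unfolding dderiv_def partial using linear_scale[OF lin] by simp
  also have "\<dots> = D (\<Sum>i\<in>UNIV. (u $ i) *\<^sub>R axis i 1)"
    by (rule linear_sum[OF lin, symmetric])
  also have "(\<Sum>i\<in>UNIV. (u $ i) *\<^sub>R axis i 1) = u"
    using basis_expansion[of u] by (simp add: scalar_mult_eq_scaleR)
  finally show ?thesis .
qed

text \<open>Finite products of differentiable functions are differentiable
  (the library provides only binary products).\<close>

lemma differentiable_prod:
  fixes f :: "'i \<Rightarrow> 'a::real_normed_vector \<Rightarrow> 'b::real_normed_field"
  assumes "finite I" "\<And>i. i \<in> I \<Longrightarrow> f i differentiable (at x within S)"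
  shows "(\<lambda>y. \<Prod>i\<in>I. f i y) differentiable (at x within S)"
  using assms by (induction I rule: finite_induct) auto

lemma finite_Gamma: "finite (Gamma k :: ('n::finite \<Rightarrow> nat) set)"
proof (rule finite_subset)
  show "Gamma k \<subseteq> PiE UNIV (\<lambda>_. {..k})" by (auto simp: Gamma_def)
qed (simp add: finite_PiE)

lemma bern_basis_differentiable: "bern_basis k \<alpha> differentiable (at w)"
  unfolding bern_basis_def[abs_def] lastc_def
  by (intro differentiable_mult differentiable_const differentiable_prod differentiable_power
      differentiable_diff differentiable_sum finite UNIV_I ballI
      bounded_linear_imp_differentiable[OF bounded_linear_vec_nth])

lemma bernstein_differentiable: "bernstein A k differentiable (at w)"
  unfolding bernstein_def[abs_def]
  by (intro differentiable_sum differentiable_mult differentiable_const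
      bern_basis_differentiable finite_Gamma ballI)

definition bary :: "real^'n::finite \<Rightarrow> 'n option \<Rightarrow> real" where
  "bary w j = (case j of None \<Rightarrow> lastc w | Some r \<Rightarrow> w $ r)"

lemma maxc_le_iff: "maxc w \<le> c \<longleftrightarrow> (\<forall>j. bary w j \<le> c)"
  unfolding maxc_def bary_def by (auto split: option.split)

lemma bary_vertex: "bary (vertex i) j = (if i = j then 1 else 0)"
  unfolding bary_def vertex_def lastc_def
  by (cases i; cases j) (auto simp: axis_def)

lemma bary_affine: "bary (x + t *\<^sub>R (y - x)) j = bary x j + t * (bary y j - bary x j)"
  unfolding bary_def lastc_def
  by (cases j) (auto simp: sum.distrib sum_subtractf sum_distrib_left[symmetric] algebra_simps)

lemma sum_option: "(\<Sum>j\<in>UNIV. f j) = f None + (\<Sum>r\<in>UNIV. f (Some r))"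
  for f :: "'a::finite option \<Rightarrow> 'b::comm_monoid_add"
  by (subst UNIV_option_conv) (simp add: sum.reindex)

lemma sum_bary: "(\<Sum>j\<in>UNIV. bary w j) = 1"
  unfolding sum_option bary_def lastc_def by simp

lemma sum_bary_displacement: "(\<Sum>j\<in>UNIV. bary w j *\<^sub>R (vertex j - v)) = w - v"
proof -
  have "(\<Sum>j\<in>UNIV. bary w j *\<^sub>R vertex j) = w"
    unfolding sum_option bary_def vertex_def
    using basis_expansion[of w] by (simp add: scalar_mult_eq_scaleR)
  moreover have "(\<Sum>j\<in>UNIV. bary w j *\<^sub>R v) = v"
    by (simp add: scaleR_sum_left[symmetric] sum_bary)
  ultimately show ?thesis
    by (simp add: scaleR_diff_right sum_subtractf)
qed

lemma simplexS_iff_bary: "w \<in> simplexS \<longleftrightarrow> (\<forall>j. 0 \<le> bary w j)"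
proof
  assume "w \<in> simplexS"
  then show "\<forall>j. 0 \<le> bary w j"
    unfolding bary_def simplexS_def lastc_def by (auto split: option.split)
next
  assume nonneg: "\<forall>j. 0 \<le> bary w j"
  then have coord: "0 \<le> w $ r" for r by (metis bary_def option.simps(5))
  have total: "(\<Sum>i\<in>UNIV. w $ i) \<le> 1"
    using nonneg[rule_format, of None] by (simp add: bary_def lastc_def)
  have "w $ r \<le> (\<Sum>i\<in>UNIV. w $ i)" for r
    by (rule member_le_sum) (auto simp: coord)
  with coord total show "w \<in> simplexS"
    unfolding simplexS_def by (auto intro: order_trans)
qed

lemma vertex_in_simplexS: "vertex j \<in> simplexS"
  by (simp add: simplexS_iff_bary bary_vertex)

lemma edge_in_simplexS:
  assumes "0 \<le> t" "t \<le> 1"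
  shows "vertex j + t *\<^sub>R (vertex i - vertex j) \<in> simplexS"
  using assms by (auto simp: simplexS_iff_bary bary_affine bary_vertex)

text \<open>Necessity: a function equal to 1 at v_j that dominates the j-th
  barycentric coordinate has slope at least -1 along every edge leaving v_j,
  since that coordinate equals 1 - t at parameter t of the edge.\<close>

lemma edge_slope_if_dominates:
  fixes f :: "real^'n::finite \<Rightarrow> real"
  assumes diff: "f differentiable (at (vertex j))" and one: "f (vertex j) = 1"
    and dom: "\<forall>w\<in>simplexS. bary w j \<le> f w" and ij: "i \<noteq> j"
  shows "- 1 \<le> dderiv f (vertex i - vertex j) (vertex j)"
proof -
  obtain D where D: "(f has_derivative D) (at (vertex j))"
    using diff unfolding differentiable_def by blast
  have "- 1 \<le> D (vertex i - vertex j)"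
  proof (rule derivative_lower_bound_on_segment[OF D])
    fix t :: real assume t: "0 < t" "t < 1"
    let ?p = "vertex j + t *\<^sub>R (vertex i - vertex j)"
    have "bary ?p j = 1 - t" using ij by (simp add: bary_affine bary_vertex)
    then show "f (vertex j) - 1 * t \<le> f ?p"
      using dom edge_in_simplexS[of t j i] t one by fastforce
  qed
  then show ?thesis using dderiv_eq[OF D] by simp
qed

text \<open>Sufficiency: a convex function equal to 1 at v_j whose edge slopes at
  v_j are all at least -1 dominates the j-th barycentric coordinate, because
  its tangent plane at v_j already does.\<close>

lemma dominates_if_edge_slope:
  fixes f :: "real^'n::finite \<Rightarrow> real"
  assumes cvx: "convex_on simplexS f"
    and diff: "f differentiable (at (vertex j))" and one: "f (vertex j) = 1"
    and slope: "\<And>i. i \<noteq> j \<Longrightarrow> - 1 \<le> dderiv f (vertex i - vertex j) (vertex j)"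
    and w: "w \<in> simplexS"
  shows "bary w j \<le> f w"
proof -
  obtain D where D: "(f has_derivative D) (at (vertex j))"
    using diff unfolding differentiable_def by blast
  have lin: "linear D" using D has_derivative_linear by blast
  have "D (w - vertex j) = (\<Sum>i\<in>UNIV. bary w i * D (vertex i - vertex j))"
    unfolding sum_bary_displacement[symmetric, of w "vertex j"]
    by (simp only: linear_sum[OF lin] linear_scale[OF lin] real_scaleR_def)
  also have "\<dots> \<ge> (\<Sum>i\<in>UNIV. - bary w i + (if i = j then bary w i else 0))"
  proof (rule sum_mono)
    fix i
    show "- bary w i + (if i = j then bary w i else 0) \<le> bary w i * D (vertex i - vertex j)"
    proof (cases "i = j")
      case True
      then show ?thesis by (simp add: linear_0[OF lin])
    next
      case False
      have "- 1 \<le> D (vertex i - vertex j)"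
        using slope[OF False] dderiv_eq[OF D] by simp
      moreover have "0 \<le> bary w i" using w simplexS_iff_bary by blast
      ultimately have "bary w i * (- 1) \<le> bary w i * D (vertex i - vertex j)"
        by (rule mult_left_mono)
      with False show ?thesis by simp
    qed
  qed
  also have "(\<Sum>i\<in>UNIV. - bary w i + (if i = j then bary w i else 0)) = bary w j - 1"
    by (simp only: sum.distrib sum_negf sum_bary sum.delta finite UNIV_I if_True)
  finally show ?thesis
    using convex_on_above_tangent[OF cvx vertex_in_simplexS w D] one by simp
qed

theorem mainTheorem5:
  fixes A :: "real^'n::finite \<Rightarrow> real" and k :: nat
  assumes "A \<in> classA"
    and "k \<ge> 1"
    and "convex_on simplexS (bernstein A k)"
    and "\<forall>j. bernstein A k (vertex j) = 1"
  shows "(\<forall>w\<in>simplexS. bernstein A k w \<ge> maxc w) \<longleftrightarrow>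
         (\<forall>i j. i \<noteq> j \<longrightarrow> dderiv (bernstein A k) (vertex i - vertex j) (vertex j) \<ge> -1)"
proof -
  let ?B = "bernstein A k"
  have one: "?B (vertex j) = 1" for j using assms(4) by blast
  have "(\<forall>w\<in>simplexS. ?B w \<ge> maxc w) \<longleftrightarrow> (\<forall>j. \<forall>w\<in>simplexS. bary w j \<le> ?B w)"
    by (auto simp: maxc_le_iff)
  also have "\<dots> \<longleftrightarrow> (\<forall>i j. i \<noteq> j \<longrightarrow> - 1 \<le> dderiv ?B (vertex i - vertex j) (vertex j))"
  proof
    assume "\<forall>j. \<forall>w\<in>simplexS. bary w j \<le> ?B w"
    then show "\<forall>i j. i \<noteq> j \<longrightarrow> - 1 \<le> dderiv ?B (vertex i - vertex j) (vertex j)"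
      using edge_slope_if_dominates[OF bernstein_differentiable one] by blast
  next
    assume "\<forall>i j. i \<noteq> j \<longrightarrow> - 1 \<le> dderiv ?B (vertex i - vertex j) (vertex j)"
    then show "\<forall>j. \<forall>w\<in>simplexS. bary w j \<le> ?B w"
      using dominates_if_edge_slope[OF assms(3) bernstein_differentiable one] by blast
  qed
  finally show ?thesis .
qed

end
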